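(* Let $\gamma\in(-2,0)$, $p\in[1,\infty)$, and let $m$ be a positive weight function on $\mathbb{R}^3$. If $1\le q<3/|\gamma|$, then $$\|Q(g,f)\|_{L^p(m)}\lesssim \|g\|_{L^1(\langle v\rangle^{\gamma+2})}\,\|\nabla^2 f\|_{L^p(m\langle v\rangle^{\gamma+2})}+\|g\|_{L^1}\,\|f\|_{L^p(m)}+\|g\|_{L^{q/(q-1)}}\,\|f\|_{L^p(m)}.$$
   Context: $\langle v\rangle=(1+|v|^2)^{1/2}$; $\|u\|_{L^p(w)}=\|wu\|_{L^p}$. $a_{ij}(z)=|z|^{\gamma+2}(\delta_{ij}-z_iz_j/|z|^2)$, $c(z)=-2(\gamma+3)|z|^\gamma$, and $Q(g,f)=(a_{ij}*g)\partial_{ij}f-(c*g)f$ (summation over repeated indices) is the Landau operator. $q/(q-1)$ is interpreted as $\infty$ when $q=1$. Implicit constants depend only on $\gamma,p,q$. *)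

theory Defs
  imports "HOL-Analysis.Analysis" "HOL-Probability.Essential_Supremum"
begin

type_synonym R3 = "real ^ 3"

definition jb :: "R3 \<Rightarrow> real" where
  "jb v = sqrt (1 + (norm v)\<^sup>2)"

definition Lp_norm :: "real \<Rightarrow> (R3 \<Rightarrow> real) \<Rightarrow> (R3 \<Rightarrow> real) \<Rightarrow> real" where
  "Lp_norm p w u = (\<integral>x. \<bar>w x * u x\<bar> powr p \<partial>lborel) powr (1 / p)"

definition in_Lp :: "real \<Rightarrow> (R3 \<Rightarrow> real) \<Rightarrow> (R3 \<Rightarrow> real) \<Rightarrow> bool" where
  "in_Lp p w u \<longleftrightarrow> u \<in> borel_measurable lborel \<and>
      integrable lborel (\<lambda>x. \<bar>w x * u x\<bar> powr p)"

definition Linf_norm :: "(R3 \<Rightarrow> real) \<Rightarrow> real" where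
  "Linf_norm u = real_of_ereal (esssup lborel (\<lambda>x. ereal \<bar>u x\<bar>))"

definition dual_norm :: "real \<Rightarrow> (R3 \<Rightarrow> real) \<Rightarrow> real" where
  "dual_norm q g = (if q = 1 then Linf_norm g else Lp_norm (q / (q - 1)) (\<lambda>_. 1) g)"

definition in_dual :: "real \<Rightarrow> (R3 \<Rightarrow> real) \<Rightarrow> bool" where
  "in_dual q g \<longleftrightarrow> (if q = 1
      then g \<in> borel_measurable lborel \<and> esssup lborel (\<lambda>x. ereal \<bar>g x\<bar>) < \<infinity>
      else in_Lp (q / (q - 1)) (\<lambda>_. 1) g)"

definition partial :: "3 \<Rightarrow> (R3 \<Rightarrow> real) \<Rightarrow> R3 \<Rightarrow> real" where
  "partial i f x = deriv (\<lambda>t. f (x + t *\<^sub>R axis i 1)) 0"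

definition C2 :: "(R3 \<Rightarrow> real) \<Rightarrow> bool" where
  "C2 f \<longleftrightarrow> (\<forall>x. f differentiable (at x)) \<and>
     (\<forall>j x. partial j f differentiable (at x)) \<and>
     (\<forall>i j. continuous_on UNIV (partial i (partial j f)))"

definition hess_norm :: "(R3 \<Rightarrow> real) \<Rightarrow> R3 \<Rightarrow> real" where
  "hess_norm f v = sqrt (\<Sum>i\<in>UNIV. \<Sum>j\<in>UNIV. (partial i (partial j f) v)\<^sup>2)"

definition akernel :: "real \<Rightarrow> 3 \<Rightarrow> 3 \<Rightarrow> R3 \<Rightarrow> real" where
  "akernel \<gamma> i j z = norm z powr (\<gamma> + 2) *
      ((if i = j then 1 else 0) - z $ i * z $ j / (norm z)\<^sup>2)"

definition ckernel :: "real \<Rightarrow> R3 \<Rightarrow> real" where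
  "ckernel \<gamma> z = - 2 * (\<gamma> + 3) * norm z powr \<gamma>"

definition conv :: "(R3 \<Rightarrow> real) \<Rightarrow> (R3 \<Rightarrow> real) \<Rightarrow> R3 \<Rightarrow> real" where
  "conv k g v = (\<integral>w. k (v - w) * g w \<partial>lborel)"

definition Landau_Q :: "real \<Rightarrow> (R3 \<Rightarrow> real) \<Rightarrow> (R3 \<Rightarrow> real) \<Rightarrow> R3 \<Rightarrow> real" where
  "Landau_Q \<gamma> g f v =
     (\<Sum>i\<in>UNIV. \<Sum>j\<in>UNIV. conv (akernel \<gamma> i j) g v * partial i (partial j f) v)
     - conv (ckernel \<gamma>) g v * f v"

end

theory Submission
  imports Defs
begin

(*
  For z = v - w we have
  |a_ij(z)| <= |z|^(gamma+2) <= 4 <v>^(gamma+2) <w>^(gamma+2), so every coefficient a_ij * g is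
  bounded at v by 4 <v>^(gamma+2) |g|_{L^1(<v>^(gamma+2))}.  The kernel |c(z)| ~ |z|^gamma is split
  at |z| = 1: the far part is bounded and costs |g|_{L^1}; the near part 1_{|z|<1} |z|^gamma lies in
  L^q because gamma q > -3, and Young's inequality ab <= a^q + b^(q/(q-1)) applied against g
  normalised in L^(q/(q-1)) bounds it by |g|_{L^(q/(q-1))}.  This gives the pointwise bound
  |Q(g,f)| <~ <v>^(gamma+2) |D^2 f| + |f|, and multiplying by m and integrating gives the claim.
*)

section \<open>Local integrability of \<open>|z|\<^sup>\<alpha>\<close>\<close>

lemma exists_dyadic_shell:
  fixes x :: real assumes "0 < x" "x < 1"
  shows "\<exists>k. (1/2)^Suc k < x \<and> x \<le> (1/2)^k"
proof -
  define k where "k = nat \<lfloor>log 2 (1/x)\<rfloor>"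
  have "0 < log 2 (1/x)" using assms by simp
  hence k: "real k \<le> log 2 (1/x)" "log 2 (1/x) < real (Suc k)"
    unfolding k_def by linarith+
  have "2 ^ k \<le> 1/x" using k(1) assms by (simp add: le_log_iff powr_realpow)
  moreover have "1/x < 2 powr real (Suc k)" using k(2) assms by (simp add: log_less_iff)
  hence "1/x < 2 ^ Suc k" by (simp only: powr_realpow)
  ultimately show ?thesis using assms by (intro exI[of _ k]) (simp add: field_simps)
qed

lemma power_powr: "0 < x \<Longrightarrow> (x ^ n) powr a = (x powr a) ^ n"
  for x a :: real
  by (simp add: powr_powr powr_power mult.commute flip: powr_realpow)

lemma nn_integral_ball_norm_powr_finite:
  fixes \<alpha> :: real
  assumes "- real DIM('a) < \<alpha>" "\<alpha> \<le> 0"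
  shows "(\<integral>\<^sup>+z. ennreal (indicator (ball (0::'a::euclidean_space) 1) z * norm z powr \<alpha>) \<partial>lborel) < \<infinity>"
proof -
  define \<beta> where "\<beta> = (1/2::real) powr \<alpha>"
  define \<rho> where "\<rho> = \<beta> * (1/2) ^ DIM('a)"
  \<comment> \<open>On the shell \<open>2^(-k-1) < |z| \<le> 2^(-k)\<close> the integrand is at most \<open>\<beta>^(k+1)\<close>; the resulting
     series is geometric with ratio \<open>\<rho> = 2^(-\<alpha>-n)\<close>, which is \<open>< 1\<close> exactly because \<open>\<alpha> > -n\<close>.\<close>
  define t where "t k z = ennreal (\<beta> ^ Suc k) * indicator (cball (0::'a) ((1/2)^k)) z" for k z
  have shell: "ennreal (indicator (ball (0::'a) 1) z * norm z powr \<alpha>) \<le> (\<Sum>k. t k z)" for z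
  proof (cases "z \<in> ball 0 1 \<and> z \<noteq> 0")
    case False thus ?thesis by (auto simp: indicator_def)
  next
    case True
    then obtain k where k: "(1/2)^Suc k < norm z" "norm z \<le> (1/2)^k"
      using exists_dyadic_shell[of "norm z"] by auto
    have "norm z powr \<alpha> \<le> ((1/2)^Suc k) powr \<alpha>"
      using k(1) assms(2) by (intro powr_mono2') auto
    also have "\<dots> = \<beta> ^ Suc k"
      unfolding \<beta>_def by (rule power_powr) simp
    finally have "ennreal (indicator (ball (0::'a) 1) z * norm z powr \<alpha>) \<le> t k z"
      using True k(2) by (simp add: t_def indicator_def ennreal_leI)
    also have "t k z \<le> (\<Sum>k. t k z)"
      using ennreal_suminf_lessD[of "\<lambda>k. t k z" "t k z" k] by (metis not_le order_less_irrefl)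
    finally show ?thesis .
  qed
  have "\<beta> = 2 powr (-\<alpha>)"
    unfolding \<beta>_def by (simp add: powr_divide powr_minus_divide)
  also have "\<dots> < 2 powr real DIM('a)"
    using assms(1) by (intro powr_less_mono) auto
  also have "\<dots> = 2 ^ DIM('a)" by (simp add: powr_realpow)
  finally have "\<rho> < 1"
    unfolding \<rho>_def by (simp add: power_one_over field_simps)
  define U where "U = unit_ball_vol (real DIM('a))"
  have "0 \<le> \<beta>" "0 \<le> U" unfolding \<beta>_def U_def by simp_all
  have integral_t: "(\<integral>\<^sup>+z. t k z \<partial>lborel) = ennreal (\<beta> * U * \<rho> ^ k)" for k
  proof -
    have "(\<integral>\<^sup>+z. t k z \<partial>lborel) = ennreal (\<beta> ^ Suc k) * emeasure lborel (cball (0::'a) ((1/2)^k))"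
      unfolding t_def by (rule nn_integral_cmult_indicator) simp
    also have "\<dots> = ennreal (\<beta> * U * \<rho> ^ k)"
      using \<open>0 \<le> \<beta>\<close> \<open>0 \<le> U\<close>
      by (simp add: emeasure_cball U_def \<rho>_def power_mult_distrib ennreal_mult[symmetric] mult_ac
          flip: power_mult)
    finally show ?thesis .
  qed
  have "(\<integral>\<^sup>+z. ennreal (indicator (ball (0::'a) 1) z * norm z powr \<alpha>) \<partial>lborel)
      \<le> (\<integral>\<^sup>+z. (\<Sum>k. t k z) \<partial>lborel)"
    by (rule nn_integral_mono) (rule shell)
  also have "\<dots> = (\<Sum>k. \<integral>\<^sup>+z. t k z \<partial>lborel)"
    unfolding t_def
    by (rule nn_integral_suminf) (intro borel_measurable_times_ennreal borel_measurable_indicator; simp)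
  also have "\<dots> = (\<Sum>k. ennreal (\<beta> * U * \<rho> ^ k))"
    by (simp only: integral_t)
  also have "\<dots> = ennreal (\<Sum>k. \<beta> * U * \<rho> ^ k)"
    using \<open>\<rho> < 1\<close> \<open>0 \<le> \<beta>\<close> \<open>0 \<le> U\<close>
    by (intro suminf_ennreal2) (auto simp: \<rho>_def intro!: summable_mult summable_geometric)
  also have "\<dots> < \<infinity>" by simp
  finally show ?thesis .
qed

lemma nn_integral_lborel_shift:
  fixes h :: "'a::euclidean_space \<Rightarrow> ennreal"
  assumes "h \<in> borel_measurable borel"
  shows "(\<integral>\<^sup>+w. h (w - v) \<partial>lborel) = (\<integral>\<^sup>+z. h z \<partial>lborel)"
proof -
  have "(\<integral>\<^sup>+z. h z \<partial>lborel) = (\<integral>\<^sup>+z. h z \<partial>distr lborel borel ((+) (-v)))"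
    by (simp add: lborel_distr_plus)
  also have "\<dots> = (\<integral>\<^sup>+w. h (-v + w) \<partial>lborel)"
    using assms by (intro nn_integral_distr) auto
  finally show ?thesis by simp
qed

lemma ball_powr_measurable:
  "(\<lambda>z::'a::euclidean_space. indicator (ball 0 1) z * norm z powr a) \<in> borel_measurable borel"
  by (intro borel_measurable_times borel_measurable_indicator powr_real_measurable borel_measurable_const
      borel_measurable_norm) simp_all

lemma shifted_ball_powr_measurable:
  fixes v :: "'a::euclidean_space"
  shows "(\<lambda>w. indicator (ball 0 1) (w - v) * norm (w - v) powr a) \<in> borel_measurable lborel"
  using measurable_compose[OF _ ball_powr_measurable, of "\<lambda>w. w - v"]
  by (simp add: borel_measurable_continuous_onI continuous_intros)

definition ball_powr_integral :: "real \<Rightarrow> real" where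
  "ball_powr_integral a =
     enn2real (\<integral>\<^sup>+z. ennreal (indicator (ball (0::R3) 1) z * norm z powr a) \<partial>lborel)"

lemma ball_powr_integral_nonneg: "0 \<le> ball_powr_integral a"
  by (simp add: ball_powr_integral_def)

lemma nn_integral_shifted_ball_powr:
  fixes v :: R3
  assumes "-3 < a" "a \<le> 0"
  shows "(\<integral>\<^sup>+w. ennreal (indicator (ball 0 1) (w - v) * norm (w - v) powr a) \<partial>lborel)
    = ennreal (ball_powr_integral a)"
proof -
  have "(\<integral>\<^sup>+w. ennreal (indicator (ball 0 1) (w - v) * norm (w - v) powr a) \<partial>lborel)
    = (\<integral>\<^sup>+z. ennreal (indicator (ball (0::R3) 1) z * norm z powr a) \<partial>lborel)"
    using measurable_compose[OF ball_powr_measurable measurable_ennreal]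
    by (intro nn_integral_lborel_shift[where h = "\<lambda>z. ennreal (indicator (ball 0 1) z * norm z powr a)"])
      (simp add: comp_def)
  also have "\<dots> = ennreal (ball_powr_integral a)"
    using nn_integral_ball_norm_powr_finite[of a, where 'a = R3] assms
    by (simp add: ball_powr_integral_def less_top[symmetric] ennreal_enn2real_if)
  finally show ?thesis .
qed


section \<open>H\<ouml>lder-type estimates\<close>

lemma mult_le_powr_add_powr_conjugate:
  fixes a b q :: real
  assumes "0 < a" "0 \<le> b" "1 < q"
  shows "a * b \<le> a powr q + b powr (q / (q - 1))"
proof (cases "b \<le> a powr (q - 1)")
  case True
  hence "a * b \<le> a * a powr (q - 1)" using assms by (simp add: mult_left_mono)
  also have "\<dots> = a powr q" using assms by (simp add: powr_mult_base)
  finally show ?thesis by (smt (verit) powr_ge_zero)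
next
  case False
  have "(a powr (q - 1)) powr (1 / (q - 1)) < b powr (1 / (q - 1))"
    using False assms by (intro powr_less_mono2) auto
  hence "a < b powr (1 / (q - 1))" using assms by (simp add: powr_powr)
  hence "a * b \<le> b powr (1 / (q - 1)) * b" using assms by (simp add: mult_right_mono)
  also have "\<dots> = b powr (1 / (q - 1) + 1)"
    using False assms by (simp add: powr_add)
  also have "1 / (q - 1) + 1 = q / (q - 1)" using assms by (simp add: field_simps)
  finally show ?thesis by (smt (verit) powr_ge_zero)
qed

lemma Lp_norm_nonneg: "0 \<le> Lp_norm p w u"
  by (simp add: Lp_norm_def)

lemma Lp_norm_1_eq: "Lp_norm 1 w g = (\<integral>x. \<bar>w x * g x\<bar> \<partial>lborel)"
  by (simp add: Lp_norm_def integral_nonneg_AE)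

lemma esssup_abs_nonneg: "0 \<le> esssup lborel (\<lambda>x::R3. ereal \<bar>g x\<bar>)"
proof -
  have "esssup lborel (\<lambda>x::R3. 0 :: ereal) \<le> esssup lborel (\<lambda>x. ereal \<bar>g x\<bar>)"
    by (rule esssup_mono) auto
  thus ?thesis by (simp add: esssup_const)
qed

lemma Linf_norm_nonneg: "0 \<le> Linf_norm g"
  using esssup_abs_nonneg[of g] by (simp add: Linf_norm_def real_of_ereal_pos)

lemma dual_norm_nonneg: "0 \<le> dual_norm q g"
  by (simp add: dual_norm_def Linf_norm_nonneg Lp_norm_nonneg)

lemma nn_integral_mult_le_Linf_norm:
  fixes a g :: "R3 \<Rightarrow> real"
  assumes "in_dual 1 g" "\<And>w. 0 \<le> a w" "a \<in> borel_measurable lborel"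
  shows "(\<integral>\<^sup>+w. ennreal (a w * \<bar>g w\<bar>) \<partial>lborel)
    \<le> ennreal (Linf_norm g) * (\<integral>\<^sup>+w. ennreal (a w) \<partial>lborel)"
proof -
  define E where "E = esssup lborel (\<lambda>x. ereal \<bar>g x\<bar>)"
  have "E < \<infinity>" using assms(1) by (simp add: in_dual_def E_def)
  hence E: "E = ereal (Linf_norm g)"
    using esssup_abs_nonneg[of g] by (cases E) (auto simp: Linf_norm_def E_def)
  have "AE w in lborel. \<bar>g w\<bar> \<le> Linf_norm g"
    using esssup_AE[of "\<lambda>x. ereal \<bar>g x\<bar>" lborel] by (simp add: E[unfolded E_def])
  hence "(\<integral>\<^sup>+w. ennreal (a w * \<bar>g w\<bar>) \<partial>lborel) \<le> (\<integral>\<^sup>+w. ennreal (Linf_norm g) * ennreal (a w) \<partial>lborel)"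
  proof (intro nn_integral_mono_AE, eventually_elim)
    case (elim w)
    hence "a w * \<bar>g w\<bar> \<le> Linf_norm g * a w"
      using assms(2)[of w] by (simp add: mult_left_mono mult.commute[of _ "a w"])
    thus ?case using Linf_norm_nonneg[of g] assms(2)[of w]
      by (simp add: ennreal_mult[symmetric] ennreal_leI)
  qed
  also have "\<dots> = ennreal (Linf_norm g) * (\<integral>\<^sup>+w. ennreal (a w) \<partial>lborel)"
    using assms(3) by (intro nn_integral_cmult) simp
  finally show ?thesis .
qed

lemma nn_integral_mult_le_Lp_norm_conjugate:
  fixes a g :: "R3 \<Rightarrow> real"
  assumes q: "1 < q" and g: "in_Lp (q / (q - 1)) (\<lambda>_. 1) g"
    and a: "\<And>w. 0 \<le> a w" "a \<in> borel_measurable lborel"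
  shows "(\<integral>\<^sup>+w. ennreal (a w * \<bar>g w\<bar>) \<partial>lborel)
    \<le> ennreal (Lp_norm (q / (q - 1)) (\<lambda>_. 1) g) * ((\<integral>\<^sup>+w. ennreal (a w powr q) \<partial>lborel) + 1)"
proof -
  define r where "r = q / (q - 1)"
  define I where "I = (\<integral>w. \<bar>g w\<bar> powr r \<partial>lborel)"
  define D where "D = I powr (1 / r)"
  have "1 < r" using q by (simp add: r_def field_simps)
  have gm: "g \<in> borel_measurable lborel" and gi: "integrable lborel (\<lambda>w. \<bar>g w\<bar> powr r)"
    using g by (simp_all add: in_Lp_def r_def)
  have "0 \<le> I" unfolding I_def by (intro integral_nonneg_AE) auto
  have D: "Lp_norm (q / (q - 1)) (\<lambda>_. 1) g = D" by (simp add: Lp_norm_def D_def I_def r_def)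
  show ?thesis
  proof (cases "I = 0")
    case True
    hence "AE w in lborel. \<bar>g w\<bar> powr r = 0"
      using gi by (simp add: I_def integral_nonneg_eq_0_iff_AE)
    hence "AE w in lborel. ennreal (a w * \<bar>g w\<bar>) = 0" by eventually_elim simp
    hence "(\<integral>\<^sup>+w. ennreal (a w * \<bar>g w\<bar>) \<partial>lborel) = 0" by (simp add: nn_integral_cong_AE)
    thus ?thesis by simp
  next
    case False
    hence "0 < I" "0 < D" using \<open>0 \<le> I\<close> by (simp_all add: D_def)
    have "D powr r = I" using \<open>1 < r\<close> \<open>0 \<le> I\<close> by (simp add: D_def powr_powr)
    \<comment> \<open>Young's inequality for \<open>a\<close> and \<open>|g|/D\<close>: as \<open>D = \<parallel>g\<parallel>\<^sub>r\<close>, the second term integrates to \<open>1\<close>\<close>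
    have pointwise: "a w * \<bar>g w\<bar> \<le> D * (a w powr q + \<bar>g w\<bar> powr r / I)" for w
    proof (cases "a w = 0")
      case False
      have "a w * \<bar>g w\<bar> = D * (a w * (\<bar>g w\<bar> / D))" using \<open>0 < D\<close> by simp
      also have "\<dots> \<le> D * (a w powr q + (\<bar>g w\<bar> / D) powr r)"
        using mult_le_powr_add_powr_conjugate[of "a w" "\<bar>g w\<bar> / D" q] False a(1)[of w] q \<open>0 < D\<close>
        by (intro mult_left_mono) (auto simp: r_def)
      also have "(\<bar>g w\<bar> / D) powr r = \<bar>g w\<bar> powr r / I"
        using \<open>0 < D\<close> \<open>D powr r = I\<close> by (simp add: powr_divide)
      finally show ?thesis .
    qed (use \<open>0 < D\<close> \<open>0 < I\<close> in simp)
    have "(\<integral>\<^sup>+w. ennreal (a w * \<bar>g w\<bar>) \<partial>lborel)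
        \<le> (\<integral>\<^sup>+w. ennreal D * (ennreal (a w powr q) + ennreal (\<bar>g w\<bar> powr r / I)) \<partial>lborel)"
      using pointwise \<open>0 < D\<close> \<open>0 < I\<close>
      by (intro nn_integral_mono)
        (simp add: ennreal_mult[symmetric] ennreal_plus[symmetric] ennreal_leI del: ennreal_plus)
    also have "\<dots> = ennreal D * ((\<integral>\<^sup>+w. ennreal (a w powr q) \<partial>lborel)
        + (\<integral>\<^sup>+w. ennreal (\<bar>g w\<bar> powr r / I) \<partial>lborel))"
      using a(2) gm by (simp add: nn_integral_cmult nn_integral_add)
    also have "(\<integral>\<^sup>+w. ennreal (\<bar>g w\<bar> powr r / I) \<partial>lborel) = ennreal (\<integral>w. \<bar>g w\<bar> powr r / I \<partial>lborel)"
      using gi \<open>0 < I\<close> by (intro nn_integral_eq_integral) auto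
    also have "(\<integral>w. \<bar>g w\<bar> powr r / I \<partial>lborel) = 1" using \<open>0 < I\<close> by (simp add: I_def)
    finally show ?thesis by (simp add: D)
  qed
qed

lemma nn_integral_mult_le_dual_norm:
  fixes a g :: "R3 \<Rightarrow> real"
  assumes "1 \<le> q" "in_dual q g" "\<And>w. 0 \<le> a w" "a \<in> borel_measurable lborel"
    and K: "(\<integral>\<^sup>+w. ennreal (a w powr q) \<partial>lborel) \<le> ennreal K" "0 \<le> K"
  shows "(\<integral>\<^sup>+w. ennreal (a w * \<bar>g w\<bar>) \<partial>lborel) \<le> ennreal ((K + 1) * dual_norm q g)"
proof (cases "q = 1")
  case True
  have "(\<integral>\<^sup>+w. ennreal (a w * \<bar>g w\<bar>) \<partial>lborel)
      \<le> ennreal (Linf_norm g) * (\<integral>\<^sup>+w. ennreal (a w powr 1) \<partial>lborel)"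
    using nn_integral_mult_le_Linf_norm[of g a] assms True by (simp add: powr_one)
  also have "\<dots> \<le> ennreal (Linf_norm g) * ennreal (K + 1)"
    using K True by (intro mult_left_mono) (auto simp: ennreal_plus intro: add_increasing2)
  also have "\<dots> = ennreal ((K + 1) * dual_norm q g)"
    using True K(2) Linf_norm_nonneg[of g] by (simp add: dual_norm_def ennreal_mult mult.commute)
  finally show ?thesis .
next
  case False
  hence "1 < q" using assms(1) by simp
  have "(\<integral>\<^sup>+w. ennreal (a w * \<bar>g w\<bar>) \<partial>lborel)
      \<le> ennreal (dual_norm q g) * ((\<integral>\<^sup>+w. ennreal (a w powr q) \<partial>lborel) + 1)"
    using nn_integral_mult_le_Lp_norm_conjugate[of q g a] assms False \<open>1 < q\<close>
    by (simp add: dual_norm_def in_dual_def)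
  also have "\<dots> \<le> ennreal (dual_norm q g) * (ennreal K + 1)"
    using K by (intro mult_left_mono add_right_mono) auto
  also have "\<dots> = ennreal ((K + 1) * dual_norm q g)"
    using K(2) dual_norm_nonneg[of q g] by (simp add: ennreal_mult mult.commute)
  finally show ?thesis .
qed

section \<open>Pointwise bounds on the coefficients\<close>

lemma conv_measurable:
  assumes [measurable]: "k \<in> borel_measurable borel" "g \<in> borel_measurable lborel"
  shows "conv k g \<in> borel_measurable lborel"
  unfolding conv_def by measurable

lemma abs_conv_le:
  assumes "(\<lambda>w. k (v - w) * g w) \<in> borel_measurable lborel"
    and "(\<integral>\<^sup>+w. ennreal \<bar>k (v - w) * g w\<bar> \<partial>lborel) \<le> ennreal B" "0 \<le> B"
  shows "\<bar>conv k g v\<bar> \<le> B"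
proof -
  have "\<bar>conv k g v\<bar> \<le> (\<integral>w. \<bar>k (v - w) * g w\<bar> \<partial>lborel)"
    unfolding conv_def by (rule integral_abs_bound)
  also have "\<dots> = enn2real (\<integral>\<^sup>+w. ennreal \<bar>k (v - w) * g w\<bar> \<partial>lborel)"
    using assms(1) by (intro integral_eq_nn_integral) auto
  also have "\<dots> \<le> B" using assms by (intro enn2real_leI) auto
  finally show ?thesis .
qed

lemma akernel_measurable [measurable]: "akernel \<gamma> i j \<in> borel_measurable borel"
  unfolding akernel_def by measurable

lemma ckernel_measurable [measurable]: "ckernel \<gamma> \<in> borel_measurable borel"
  unfolding ckernel_def by measurable

lemma abs_akernel_le:
  assumes "-2 < \<gamma>"
  shows "\<bar>akernel \<gamma> i j z\<bar> \<le> norm z powr (\<gamma> + 2)"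
proof (cases "z = 0")
  case False
  have "\<bar>z $ i * z $ j\<bar> \<le> norm z * norm z"
    unfolding abs_mult by (intro mult_mono) (simp_all add: component_le_norm_cart)
  hence "\<bar>z $ i * z $ j\<bar> / (norm z)\<^sup>2 \<le> 1"
    using False by (simp add: power2_eq_square)
  moreover have "0 \<le> z $ i * z $ j / (norm z)\<^sup>2" if "i = j" using that by simp
  ultimately have "\<bar>(if i = j then 1 else 0) - z $ i * z $ j / (norm z)\<^sup>2\<bar> \<le> 1"
    by (auto simp: abs_div)
  thus ?thesis
    unfolding akernel_def abs_mult by (simp add: mult_left_le)
qed (use assms in \<open>simp add: akernel_def\<close>)

lemma norm_le_jb: "norm v \<le> jb v"
  unfolding jb_def by (rule real_le_rsqrt) simp

lemma one_le_jb: "1 \<le> jb v"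
  unfolding jb_def by simp

lemma norm_diff_powr_le_jb:
  assumes "0 \<le> s" "s \<le> 2"
  shows "norm (v - w) powr s \<le> 4 * (jb v powr s * jb w powr s)"
proof -
  have "norm (v - w) \<le> jb v + jb w"
    using norm_triangle_ineq4[of v w] norm_le_jb[of v] norm_le_jb[of w] by linarith
  also have "\<dots> \<le> 2 * (jb v * jb w)"
  proof -
    have "0 \<le> (jb v - 1) * (jb w - 1)" using one_le_jb[of v] one_le_jb[of w] by simp
    moreover have "1 \<le> jb v * jb w"
      using one_le_jb[of v] one_le_jb[of w] by (metis mult_mono' mult_1 zero_le_one)
    ultimately show ?thesis by (simp add: algebra_simps)
  qed
  finally have "norm (v - w) powr s \<le> (2 * (jb v * jb w)) powr s"
    using assms by (intro powr_mono2) auto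
  also have "\<dots> = 2 powr s * (jb v powr s * jb w powr s)"
    using one_le_jb[of v] one_le_jb[of w] by (simp add: powr_mult)
  also have "\<dots> \<le> 2 powr 2 * (jb v powr s * jb w powr s)"
    using assms by (intro mult_right_mono powr_mono) auto
  finally show ?thesis by simp
qed

lemma abs_conv_akernel_le:
  assumes g: "in_Lp 1 (\<lambda>v. jb v powr (\<gamma> + 2)) g" and "-2 < \<gamma>" "\<gamma> < 0"
  shows "\<bar>conv (akernel \<gamma> i j) g v\<bar> \<le> 4 * jb v powr (\<gamma> + 2) * Lp_norm 1 (\<lambda>v. jb v powr (\<gamma> + 2)) g"
proof -
  define s where "s = \<gamma> + 2"
  have gm [measurable]: "g \<in> borel_measurable lborel"
    and gi: "integrable lborel (\<lambda>w. \<bar>jb w powr s * g w\<bar>)"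
    using g by (simp_all add: in_Lp_def s_def)
  have "\<bar>akernel \<gamma> i j (v - w) * g w\<bar> \<le> 4 * jb v powr s * \<bar>jb w powr s * g w\<bar>" for w
  proof -
    have kernel: "\<bar>akernel \<gamma> i j (v - w)\<bar> \<le> 4 * (jb v powr s * jb w powr s)"
      using abs_akernel_le[OF assms(2), of i j "v - w"] norm_diff_powr_le_jb[of s v w] assms
      by (simp add: s_def)
    show ?thesis using mult_right_mono[OF kernel abs_ge_zero[of "g w"]] by (simp add: abs_mult mult_ac)
  qed
  hence "(\<integral>\<^sup>+w. ennreal \<bar>akernel \<gamma> i j (v - w) * g w\<bar> \<partial>lborel)
      \<le> (\<integral>\<^sup>+w. ennreal (4 * jb v powr s) * ennreal \<bar>jb w powr s * g w\<bar> \<partial>lborel)"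
    by (intro nn_integral_mono) (simp add: ennreal_mult[symmetric] ennreal_leI)
  also have "\<dots> = ennreal (4 * jb v powr s) * ennreal (\<integral>w. \<bar>jb w powr s * g w\<bar> \<partial>lborel)"
    using gi by (simp add: nn_integral_cmult nn_integral_eq_integral)
  also have "\<dots> = ennreal (4 * jb v powr (\<gamma> + 2) * Lp_norm 1 (\<lambda>v. jb v powr (\<gamma> + 2)) g)"
    by (simp add: Lp_norm_1_eq s_def ennreal_mult[symmetric] integral_nonneg_AE)
  finally show ?thesis
    by (rule abs_conv_le[rotated]) (auto intro: mult_nonneg_nonneg Lp_norm_nonneg)
qed

lemma norm_powr_le_ball_part_plus_one:
  assumes "\<gamma> \<le> 0"
  shows "norm (v - w) powr \<gamma> \<le> indicator (ball 0 1) (w - v) * norm (w - v) powr \<gamma> + 1"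
proof (cases "w - v \<in> ball 0 1")
  case False
  hence "1 \<le> norm (v - w)" by (simp add: norm_minus_commute)
  hence "norm (v - w) powr \<gamma> \<le> 1 powr \<gamma>" using assms by (intro powr_mono2') auto
  thus ?thesis using False by simp
qed (simp add: norm_minus_commute)

lemma abs_conv_ckernel_le:
  assumes g: "in_Lp 1 (\<lambda>_. 1) g" "in_dual q g" and q: "1 \<le> q"
    and \<gamma>: "-2 < \<gamma>" "\<gamma> < 0" "q < 3 / \<bar>\<gamma>\<bar>"
  shows "\<bar>conv (ckernel \<gamma>) g v\<bar>
    \<le> 2 * (\<gamma> + 3) * (Lp_norm 1 (\<lambda>_. 1) g + (ball_powr_integral (\<gamma> * q) + 1) * dual_norm q g)"
proof -
  define c where "c = 2 * (\<gamma> + 3)"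
  define K where "K = ball_powr_integral (\<gamma> * q)"
  define A where "A w = indicator (ball 0 1) (w - v) * norm (w - v) powr \<gamma>" for w
  have "0 < c" using \<gamma> by (simp add: c_def)
  have A: "0 \<le> A w" for w by (simp add: A_def)
  have Am [measurable]: "A \<in> borel_measurable lborel"
    unfolding A_def by (rule shifted_ball_powr_measurable)
  have gm [measurable]: "g \<in> borel_measurable lborel" and gi: "integrable lborel (\<lambda>w. \<bar>g w\<bar>)"
    using g(1) by (simp_all add: in_Lp_def)
  have "-3 < \<gamma> * q" using \<gamma> q by (simp add: field_simps)
  moreover have "\<gamma> * q \<le> 0" using \<gamma> q by (simp add: mult_nonpos_nonneg)
  moreover have "A w powr q = indicator (ball 0 1) (w - v) * norm (w - v) powr (\<gamma> * q)" for w
    by (simp add: A_def indicator_def powr_powr)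
  ultimately have "(\<integral>\<^sup>+w. ennreal (A w powr q) \<partial>lborel) = ennreal K"
    by (simp add: K_def nn_integral_shifted_ball_powr)
  hence near: "(\<integral>\<^sup>+w. ennreal (A w * \<bar>g w\<bar>) \<partial>lborel) \<le> ennreal ((K + 1) * dual_norm q g)"
    using A g(2) q by (intro nn_integral_mult_le_dual_norm) (simp_all add: K_def ball_powr_integral_nonneg)
  have "\<bar>ckernel \<gamma> (v - w) * g w\<bar> \<le> c * (A w * \<bar>g w\<bar> + \<bar>g w\<bar>)" for w
  proof -
    have "\<bar>ckernel \<gamma> (v - w) * g w\<bar> = c * (norm (v - w) powr \<gamma> * \<bar>g w\<bar>)"
      using \<gamma> by (simp add: ckernel_def c_def abs_mult)
    also have "\<dots> \<le> c * ((A w + 1) * \<bar>g w\<bar>)"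
      using norm_powr_le_ball_part_plus_one[of \<gamma> v w] \<gamma> \<open>0 < c\<close>
      by (intro mult_left_mono mult_right_mono) (simp_all add: A_def)
    finally show ?thesis by (simp add: distrib_right)
  qed
  hence "(\<integral>\<^sup>+w. ennreal \<bar>ckernel \<gamma> (v - w) * g w\<bar> \<partial>lborel)
      \<le> (\<integral>\<^sup>+w. ennreal c * (ennreal (A w * \<bar>g w\<bar>) + ennreal \<bar>g w\<bar>) \<partial>lborel)"
    using A \<open>0 < c\<close>
    by (intro nn_integral_mono)
      (simp add: ennreal_mult[symmetric] ennreal_plus[symmetric] ennreal_leI del: ennreal_plus)
  also have "\<dots> = ennreal c * ((\<integral>\<^sup>+w. ennreal (A w * \<bar>g w\<bar>) \<partial>lborel) + ennreal (Lp_norm 1 (\<lambda>_. 1) g))"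
    using gi by (simp add: nn_integral_cmult nn_integral_add nn_integral_eq_integral Lp_norm_1_eq)
  also have "\<dots> \<le> ennreal c * (ennreal ((K + 1) * dual_norm q g) + ennreal (Lp_norm 1 (\<lambda>_. 1) g))"
    using near by (intro mult_left_mono add_right_mono) auto
  also have "\<dots> = ennreal (c * (Lp_norm 1 (\<lambda>_. 1) g + (K + 1) * dual_norm q g))"
    using \<open>0 < c\<close> ball_powr_integral_nonneg[of "\<gamma> * q"] dual_norm_nonneg[of q g] Lp_norm_nonneg
    by (simp add: K_def ennreal_mult[symmetric] ennreal_plus[symmetric] add.commute del: ennreal_plus)
  finally show ?thesis
    unfolding c_def[symmetric] K_def[symmetric]
    using \<open>0 < c\<close> ball_powr_integral_nonneg[of "\<gamma> * q"] dual_norm_nonneg[of q g] Lp_norm_nonneg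
    by (intro abs_conv_le[rotated]) (simp_all add: K_def)
qed

lemma hess_norm_nonneg: "0 \<le> hess_norm f v"
  by (simp add: hess_norm_def sum_nonneg)

lemma abs_partial_partial_le_hess_norm: "\<bar>partial i (partial j f) v\<bar> \<le> hess_norm f v"
proof -
  have "(partial i (partial j f) v)\<^sup>2 \<le> (\<Sum>j'\<in>UNIV. (partial i (partial j' f) v)\<^sup>2)"
    by (rule member_le_sum) auto
  also have "\<dots> \<le> (\<Sum>i'\<in>UNIV. \<Sum>j'\<in>UNIV. (partial i' (partial j' f) v)\<^sup>2)"
    by (rule member_le_sum[where f = "\<lambda>i'. \<Sum>j'\<in>UNIV. (partial i' (partial j' f) v)\<^sup>2"])
      (auto intro: sum_nonneg)
  finally show ?thesis
    unfolding hess_norm_def by (metis real_sqrt_abs real_sqrt_le_mono)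
qed

lemma abs_Landau_Q_le:
  assumes g: "in_Lp 1 (\<lambda>v. jb v powr (\<gamma> + 2)) g" "in_Lp 1 (\<lambda>_. 1) g" "in_dual q g"
    and "1 \<le> q" "-2 < \<gamma>" "\<gamma> < 0" "q < 3 / \<bar>\<gamma>\<bar>"
  shows "\<bar>Landau_Q \<gamma> g f v\<bar>
    \<le> 36 * Lp_norm 1 (\<lambda>v. jb v powr (\<gamma> + 2)) g * \<bar>jb v powr (\<gamma> + 2) * hess_norm f v\<bar>
      + 2 * (\<gamma> + 3) * (Lp_norm 1 (\<lambda>_. 1) g + (ball_powr_integral (\<gamma> * q) + 1) * dual_norm q g) * \<bar>f v\<bar>"
proof -
  define T where "T = 4 * jb v powr (\<gamma> + 2) * Lp_norm 1 (\<lambda>v. jb v powr (\<gamma> + 2)) g"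
  have "\<bar>conv (akernel \<gamma> i j) g v * partial i (partial j f) v\<bar> \<le> T * hess_norm f v" for i j
    unfolding abs_mult T_def using assms Lp_norm_nonneg
    by (intro mult_mono abs_conv_akernel_le abs_partial_partial_le_hess_norm) auto
  hence "\<bar>\<Sum>i\<in>UNIV. \<Sum>j\<in>UNIV. conv (akernel \<gamma> i j) g v * partial i (partial j f) v\<bar>
      \<le> (\<Sum>i\<in>(UNIV::3 set). \<Sum>j\<in>(UNIV::3 set). T * hess_norm f v)"
    by (intro order_trans[OF sum_abs] sum_mono order_trans[OF sum_abs]) auto
  also have "\<dots> = 36 * Lp_norm 1 (\<lambda>v. jb v powr (\<gamma> + 2)) g * \<bar>jb v powr (\<gamma> + 2) * hess_norm f v\<bar>"
    by (simp add: T_def abs_mult hess_norm_nonneg)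
  finally have diffusion:
    "\<bar>\<Sum>i\<in>UNIV. \<Sum>j\<in>UNIV. conv (akernel \<gamma> i j) g v * partial i (partial j f) v\<bar>
      \<le> 36 * Lp_norm 1 (\<lambda>v. jb v powr (\<gamma> + 2)) g * \<bar>jb v powr (\<gamma> + 2) * hess_norm f v\<bar>" .
  have reaction: "\<bar>conv (ckernel \<gamma>) g v * f v\<bar>
      \<le> 2 * (\<gamma> + 3) * (Lp_norm 1 (\<lambda>_. 1) g + (ball_powr_integral (\<gamma> * q) + 1) * dual_norm q g) * \<bar>f v\<bar>"
    unfolding abs_mult using abs_conv_ckernel_le[OF g(2,3) assms(4-7)]
    by (intro mult_right_mono) auto
  show ?thesis
    unfolding Landau_Q_def using diffusion reaction by (smt (verit) abs_triangle_ineq4)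
qed

lemma Landau_Q_measurable:
  assumes "g \<in> borel_measurable lborel" "f \<in> borel_measurable lborel" "C2 f"
  shows "Landau_Q \<gamma> g f \<in> borel_measurable lborel"
proof -
  have "partial i (partial j f) \<in> borel_measurable lborel" for i j
    using assms(3) by (simp add: C2_def borel_measurable_continuous_onI)
  thus ?thesis
    unfolding Landau_Q_def using assms(1,2)
    by (intro borel_measurable_diff borel_measurable_sum borel_measurable_times conv_measurable
        akernel_measurable ckernel_measurable) auto
qed

section \<open>The weighted \<open>L\<^sup>p\<close> estimate\<close>

lemma powr_add_le_two_powr:
  fixes a b t :: real
  assumes "0 \<le> a" "0 \<le> b" "0 < t"
  shows "(a + b) powr t \<le> 2 powr t * (a powr t + b powr t)"
proof -
  have "(a + b) powr t \<le> (2 * max a b) powr t" using assms by (intro powr_mono2) auto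
  also have "\<dots> = 2 powr t * max a b powr t" using assms by (simp add: powr_mult)
  also have "max a b powr t \<le> a powr t + b powr t" by (simp add: max_def)
  finally show ?thesis by simp
qed

lemma two_powr_sum_root_le:
  fixes A B I\<^sub>1 I\<^sub>2 p :: real
  assumes "1 \<le> p" "0 \<le> A" "0 \<le> B" "0 \<le> I\<^sub>1" "0 \<le> I\<^sub>2"
  shows "(2 powr p * (A powr p * I\<^sub>1 + B powr p * I\<^sub>2)) powr (1 / p)
    \<le> 4 * (A * I\<^sub>1 powr (1 / p) + B * I\<^sub>2 powr (1 / p))"
proof -
  have "(2 powr p * (A powr p * I\<^sub>1 + B powr p * I\<^sub>2)) powr (1 / p)
      = 2 * (A powr p * I\<^sub>1 + B powr p * I\<^sub>2) powr (1 / p)"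
    using assms by (simp add: powr_mult powr_powr)
  also have "(A powr p * I\<^sub>1 + B powr p * I\<^sub>2) powr (1 / p)
      \<le> 2 powr (1 / p) * ((A powr p * I\<^sub>1) powr (1 / p) + (B powr p * I\<^sub>2) powr (1 / p))"
    using assms by (intro powr_add_le_two_powr) auto
  also have "\<dots> = 2 powr (1 / p) * (A * I\<^sub>1 powr (1 / p) + B * I\<^sub>2 powr (1 / p))"
    using assms by (simp add: powr_mult powr_powr)
  also have "\<dots> \<le> 2 * (A * I\<^sub>1 powr (1 / p) + B * I\<^sub>2 powr (1 / p))"
    using assms powr_mono[of "1 / p" 1 "2::real"] by (intro mult_right_mono) simp_all
  finally show ?thesis by simp
qed

lemma Lp_norm_le_of_abs_le:
  assumes p: "1 \<le> p" and [measurable]: "u \<in> borel_measurable lborel" "w \<in> borel_measurable lborel"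
    and x: "in_Lp p w\<^sub>1 x\<^sub>1" "in_Lp p w\<^sub>2 x\<^sub>2" and "0 \<le> A" "0 \<le> B"
    and le: "\<And>v. \<bar>w v * u v\<bar> \<le> A * \<bar>w\<^sub>1 v * x\<^sub>1 v\<bar> + B * \<bar>w\<^sub>2 v * x\<^sub>2 v\<bar>"
  shows "in_Lp p w u \<and> Lp_norm p w u \<le> 4 * (A * Lp_norm p w\<^sub>1 x\<^sub>1 + B * Lp_norm p w\<^sub>2 x\<^sub>2)"
proof -
  define h\<^sub>1 where "h\<^sub>1 = (\<lambda>v. \<bar>w\<^sub>1 v * x\<^sub>1 v\<bar> powr p)"
  define h\<^sub>2 where "h\<^sub>2 = (\<lambda>v. \<bar>w\<^sub>2 v * x\<^sub>2 v\<bar> powr p)"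
  define I\<^sub>1 where "I\<^sub>1 = (\<integral>v. h\<^sub>1 v \<partial>lborel)"
  define I\<^sub>2 where "I\<^sub>2 = (\<integral>v. h\<^sub>2 v \<partial>lborel)"
  have hi: "integrable lborel h\<^sub>1" "integrable lborel h\<^sub>2"
    using x by (simp_all add: in_Lp_def h\<^sub>1_def h\<^sub>2_def)
  have "0 \<le> I\<^sub>1" "0 \<le> I\<^sub>2"
    unfolding I\<^sub>1_def I\<^sub>2_def h\<^sub>1_def h\<^sub>2_def by (simp_all add: integral_nonneg_AE)
  have pointwise: "\<bar>w v * u v\<bar> powr p \<le> 2 powr p * (A powr p * h\<^sub>1 v + B powr p * h\<^sub>2 v)" for v
  proof -
    have "\<bar>w v * u v\<bar> powr p \<le> (A * \<bar>w\<^sub>1 v * x\<^sub>1 v\<bar> + B * \<bar>w\<^sub>2 v * x\<^sub>2 v\<bar>) powr p"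
      using le p by (intro powr_mono2) auto
    also have "\<dots> \<le> 2 powr p * ((A * \<bar>w\<^sub>1 v * x\<^sub>1 v\<bar>) powr p + (B * \<bar>w\<^sub>2 v * x\<^sub>2 v\<bar>) powr p)"
      using \<open>0 \<le> A\<close> \<open>0 \<le> B\<close> p by (intro powr_add_le_two_powr) auto
    finally show ?thesis
      using \<open>0 \<le> A\<close> \<open>0 \<le> B\<close> by (simp add: h\<^sub>1_def h\<^sub>2_def powr_mult)
  qed
  have ui: "integrable lborel (\<lambda>v. \<bar>w v * u v\<bar> powr p)"
  proof (rule Bochner_Integration.integrable_bound)
    show "integrable lborel (\<lambda>v. 2 powr p * (A powr p * h\<^sub>1 v + B powr p * h\<^sub>2 v))"
      using hi by simp
    show "(\<lambda>v. \<bar>w v * u v\<bar> powr p) \<in> borel_measurable lborel"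
      by measurable
    show "AE v in lborel. norm (\<bar>w v * u v\<bar> powr p) \<le> norm (2 powr p * (A powr p * h\<^sub>1 v + B powr p * h\<^sub>2 v))"
      using pointwise by (auto intro: order_trans[OF _ abs_ge_self])
  qed
  have "(\<integral>v. \<bar>w v * u v\<bar> powr p \<partial>lborel) \<le> (\<integral>v. 2 powr p * (A powr p * h\<^sub>1 v + B powr p * h\<^sub>2 v) \<partial>lborel)"
    using ui hi pointwise by (intro integral_mono) simp_all
  also have "\<dots> = 2 powr p * (A powr p * I\<^sub>1 + B powr p * I\<^sub>2)"
    using hi by (simp add: I\<^sub>1_def I\<^sub>2_def)
  finally have "Lp_norm p w u \<le> (2 powr p * (A powr p * I\<^sub>1 + B powr p * I\<^sub>2)) powr (1 / p)"
    unfolding Lp_norm_def using p by (intro powr_mono2) (simp_all add: integral_nonneg_AE)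
  also have "\<dots> \<le> 4 * (A * I\<^sub>1 powr (1 / p) + B * I\<^sub>2 powr (1 / p))"
    using p \<open>0 \<le> A\<close> \<open>0 \<le> B\<close> \<open>0 \<le> I\<^sub>1\<close> \<open>0 \<le> I\<^sub>2\<close> by (rule two_powr_sum_root_le)
  finally show ?thesis
    using ui by (simp add: in_Lp_def Lp_norm_def I\<^sub>1_def I\<^sub>2_def h\<^sub>1_def h\<^sub>2_def)
qed

lemma Lp_norm_Landau_Q_le:
  assumes \<gamma>: "-2 < \<gamma>" "\<gamma> < 0" and p: "1 \<le> p" and q: "1 \<le> q" "q < 3 / \<bar>\<gamma>\<bar>"
    and m: "\<And>v. 0 < m v" "m \<in> borel_measurable lborel"
    and g: "in_Lp 1 (\<lambda>v. jb v powr (\<gamma> + 2)) g" "in_Lp 1 (\<lambda>_. 1) g" "in_dual q g"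
    and f: "C2 f" "in_Lp p m f" "in_Lp p (\<lambda>v. m v * jb v powr (\<gamma> + 2)) (hess_norm f)"
  shows "in_Lp p m (Landau_Q \<gamma> g f) \<and>
    Lp_norm p m (Landau_Q \<gamma> g f)
      \<le> 144 * Lp_norm 1 (\<lambda>v. jb v powr (\<gamma> + 2)) g * Lp_norm p (\<lambda>v. m v * jb v powr (\<gamma> + 2)) (hess_norm f)
        + 8 * (\<gamma> + 3) * (Lp_norm 1 (\<lambda>_. 1) g + (ball_powr_integral (\<gamma> * q) + 1) * dual_norm q g)
          * Lp_norm p m f"
proof -
  define B where "B = 2 * (\<gamma> + 3) * (Lp_norm 1 (\<lambda>_. 1) g + (ball_powr_integral (\<gamma> * q) + 1) * dual_norm q g)"
  have "\<bar>m v * Landau_Q \<gamma> g f v\<bar>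
      \<le> 36 * Lp_norm 1 (\<lambda>v. jb v powr (\<gamma> + 2)) g * \<bar>m v * jb v powr (\<gamma> + 2) * hess_norm f v\<bar>
        + B * \<bar>m v * f v\<bar>" for v
  proof -
    have "m v * \<bar>Landau_Q \<gamma> g f v\<bar>
        \<le> m v * (36 * Lp_norm 1 (\<lambda>v. jb v powr (\<gamma> + 2)) g * \<bar>jb v powr (\<gamma> + 2) * hess_norm f v\<bar>
          + B * \<bar>f v\<bar>)"
      using abs_Landau_Q_le[OF g q(1) \<gamma> q(2), of f v] m(1)[of v]
      by (intro mult_left_mono) (simp_all add: B_def)
    thus ?thesis using m(1)[of v] by (simp add: abs_mult algebra_simps)
  qed
  moreover have "Landau_Q \<gamma> g f \<in> borel_measurable lborel"
    using g(2) f(1,2) by (intro Landau_Q_measurable) (simp_all add: in_Lp_def)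
  ultimately have "in_Lp p m (Landau_Q \<gamma> g f) \<and>
    Lp_norm p m (Landau_Q \<gamma> g f)
      \<le> 4 * (36 * Lp_norm 1 (\<lambda>v. jb v powr (\<gamma> + 2)) g * Lp_norm p (\<lambda>v. m v * jb v powr (\<gamma> + 2)) (hess_norm f)
        + B * Lp_norm p m f)"
    using p m(2) f(2,3) \<gamma> Lp_norm_nonneg dual_norm_nonneg[of q g] ball_powr_integral_nonneg[of "\<gamma> * q"]
    by (intro Lp_norm_le_of_abs_le) (simp_all add: B_def)
  thus ?thesis by (simp add: B_def algebra_simps)
qed

theorem lemma4p4:
  fixes \<gamma> p q :: real
  assumes "-2 < \<gamma>" "\<gamma> < 0" "1 \<le> p" "1 \<le> q" "q < 3 / \<bar>\<gamma>\<bar>"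
  shows "\<exists>C>0. \<forall>(m :: R3 \<Rightarrow> real) (g :: R3 \<Rightarrow> real) (f :: R3 \<Rightarrow> real).
    (\<forall>v. 0 < m v) \<and> m \<in> borel_measurable lborel \<and>
    in_Lp 1 (\<lambda>v. jb v powr (\<gamma> + 2)) g \<and> in_Lp 1 (\<lambda>_. 1) g \<and> in_dual q g \<and>
    C2 f \<and> in_Lp p m f \<and> in_Lp p (\<lambda>v. m v * jb v powr (\<gamma> + 2)) (hess_norm f)
    \<longrightarrow>
    in_Lp p m (Landau_Q \<gamma> g f) \<and>
    Lp_norm p m (Landau_Q \<gamma> g f)
      \<le> C * (Lp_norm 1 (\<lambda>v. jb v powr (\<gamma> + 2)) g
               * Lp_norm p (\<lambda>v. m v * jb v powr (\<gamma> + 2)) (hess_norm f)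
             + Lp_norm 1 (\<lambda>_. 1) g * Lp_norm p m f
             + dual_norm q g * Lp_norm p m f)"
proof -
  define K where "K = ball_powr_integral (\<gamma> * q)"
  define C where "C = 144 + 8 * (\<gamma> + 3) * (K + 1)"
  have "0 \<le> (\<gamma> + 3) * K" using assms ball_powr_integral_nonneg by (simp add: K_def)
  hence C: "0 < C" "144 \<le> C" "8 * (\<gamma> + 3) \<le> C" "8 * (\<gamma> + 3) * (K + 1) \<le> C"
    using assms by (simp_all add: C_def algebra_simps)
  have constants: "144 * N\<^sub>\<gamma> * H + 8 * (\<gamma> + 3) * (N + (K + 1) * D) * F \<le> C * (N\<^sub>\<gamma> * H + N * F + D * F)"
    if "0 \<le> N\<^sub>\<gamma> * H" "0 \<le> N * F" "0 \<le> D * F" for N\<^sub>\<gamma> N D H F :: real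
  proof -
    have "144 * (N\<^sub>\<gamma> * H) + 8 * (\<gamma> + 3) * (N * F) + 8 * (\<gamma> + 3) * (K + 1) * (D * F)
        \<le> C * (N\<^sub>\<gamma> * H) + C * (N * F) + C * (D * F)"
      using C that by (intro add_mono mult_right_mono) auto
    thus ?thesis by (simp add: algebra_simps)
  qed
  show ?thesis
    using C(1) Lp_norm_Landau_Q_le[OF assms(1-3) assms(4,5)]
      constants[OF mult_nonneg_nonneg mult_nonneg_nonneg mult_nonneg_nonneg, OF Lp_norm_nonneg Lp_norm_nonneg
        Lp_norm_nonneg Lp_norm_nonneg dual_norm_nonneg Lp_norm_nonneg]
    unfolding K_def by (blast intro: order_trans)
qed

end
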